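(* Let $G$ be a simple graph on $n$ nodes with $m$ edges in which every node has degree at least $2$, let $\mathcal{B}$ be its non-backtracking matrix, $\mathcal{D}_{row}$ the diagonal matrix of row sums of $\mathcal{B}$, and $\mathcal{T}=\mathcal{D}_{row}^{-1}\mathcal{B}$. Let $\lambda\in\mathbb{C}\setminus\mathbb{R}$ be an eigenvalue of $\mathcal{T}$ and $z\in\mathbb{C}^{2m}$ a right eigenvector: $\mathcal{T}z=\lambda z$. Then $\overline{\breve z}$ is a left eigenvector of $\mathcal{T}$ with the same eigenvalue $\lambda$, i.e. $\mathcal{T}^*\,\overline{\breve z}=\bar\lambda\,\overline{\breve z}$.
   Context: Each edge $\{i,j\}$ of $G$ is considered in both orientations, giving the set $E^{\rightarrow}$ of $2m$ oriented edges. For an oriented edge $e=[i,j]$, $\mathrm{in}(e)=i$, $\mathrm{out}(e)=j$, and $e^{-1}=[j,i]$. The non-backtracking matrix $\mathcal{B}=(b_{ef})_{e,f\in E^{\rightarrow}}$ has $b_{ef}=1$ if $\mathrm{out}(e)=\mathrm{in}(f)$ and $f\neq e^{-1}$, else $0$. The diagonal entry of $\mathcal{D}_{row}$ at $e=[i,j]$ is $d_j-1$. For $x\in\mathbb{C}^{2m}$, $\breve x_e=x_{e^{-1}}$; the bar denotes entrywise complex conjugation and ${}^*$ the conjugate transpose. A vector $v$ is a left eigenvector of $A$ with eigenvalue $\lambda$ if $v^*A=\lambda v^*$. *)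

theory Defs
  imports Complex_Main
begin

definition simple_graph :: "'a set \<Rightarrow> ('a \<Rightarrow> 'a \<Rightarrow> bool) \<Rightarrow> bool" where
  "simple_graph V E \<longleftrightarrow> finite V \<and> (\<forall>i j. E i j \<longrightarrow> i \<in> V \<and> j \<in> V)
     \<and> (\<forall>i j. E i j \<longrightarrow> E j i) \<and> (\<forall>i. \<not> E i i)"

definition degree :: "'a set \<Rightarrow> ('a \<Rightarrow> 'a \<Rightarrow> bool) \<Rightarrow> 'a \<Rightarrow> nat" where
  "degree V E v = card {u \<in> V. E v u}"

text \<open>Oriented edges [i,j], represented as pairs (i,j); in e = fst e, out e = snd e.\<close>
definition oriented_edges :: "'a set \<Rightarrow> ('a \<Rightarrow> 'a \<Rightarrow> bool) \<Rightarrow> ('a \<times> 'a) set" where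
  "oriented_edges V E = {(i, j). i \<in> V \<and> j \<in> V \<and> E i j}"

definition rev_edge :: "'a \<times> 'a \<Rightarrow> 'a \<times> 'a" where
  "rev_edge e = (snd e, fst e)"

definition nb_matrix :: "('a \<times> 'a) \<Rightarrow> ('a \<times> 'a) \<Rightarrow> complex" where
  "nb_matrix e f = (if snd e = fst f \<and> f \<noteq> rev_edge e then 1 else 0)"

definition nb_rowsum :: "'a set \<Rightarrow> ('a \<Rightarrow> 'a \<Rightarrow> bool) \<Rightarrow> ('a \<times> 'a) \<Rightarrow> complex" where
  "nb_rowsum V E e = (\<Sum>f\<in>oriented_edges V E. nb_matrix e f)"

definition T_matrix :: "'a set \<Rightarrow> ('a \<Rightarrow> 'a \<Rightarrow> bool) \<Rightarrow> ('a \<times> 'a) \<Rightarrow> ('a \<times> 'a) \<Rightarrow> complex" where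
  "T_matrix V E e f = nb_matrix e f / nb_rowsum V E e"

definition mat_vec :: "('b set) \<Rightarrow> ('b \<Rightarrow> 'b \<Rightarrow> complex) \<Rightarrow> ('b \<Rightarrow> complex) \<Rightarrow> 'b \<Rightarrow> complex" where
  "mat_vec I M x e = (\<Sum>f\<in>I. M e f * x f)"

definition adj_mat_vec :: "('b set) \<Rightarrow> ('b \<Rightarrow> 'b \<Rightarrow> complex) \<Rightarrow> ('b \<Rightarrow> complex) \<Rightarrow> 'b \<Rightarrow> complex" where
  "adj_mat_vec I M x e = (\<Sum>f\<in>I. cnj (M f e) * x f)"

definition breve :: "('a \<times> 'a \<Rightarrow> complex) \<Rightarrow> 'a \<times> 'a \<Rightarrow> complex" where
  "breve x e = x (rev_edge e)"

end

theory Submission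
  imports Defs
begin

text \<open>Both non-zero entries T(f,e) and T(e\<inverse>,f\<inverse>) sit at a path f, e through the vertex
  out(f) = in(e) and are divided by d(out f) - 1 = d(out e\<inverse>) - 1, so T is invariant under
  the transpose-and-reverse symmetry T(f,e) = T(e\<inverse>,f\<inverse>).  Reindexing the sum for
  T* conj(z\<inverse>) by f \<mapsto> f\<inverse> then turns it into the conjugate of (T z)(e\<inverse>) = \<lambda> z(e\<inverse>).\<close>

lemma rev_edge_rev_edge [simp]: "rev_edge (rev_edge e) = e"
  by (simp add: rev_edge_def)

lemma rev_edge_in_oriented_edges:
  assumes "simple_graph V E" and "e \<in> oriented_edges V E"
  shows "rev_edge e \<in> oriented_edges V E"
  using assms by (auto simp: oriented_edges_def rev_edge_def simple_graph_def)

lemma bij_betw_rev_edge_oriented_edges: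
  assumes "simple_graph V E"
  shows "bij_betw rev_edge (oriented_edges V E) (oriented_edges V E)"
  by (rule bij_betw_byWitness[where f' = rev_edge])
     (auto intro: rev_edge_in_oriented_edges[OF assms])

lemma finite_oriented_edges:
  assumes "simple_graph V E"
  shows "finite (oriented_edges V E)"
proof (rule finite_subset)
  show "oriented_edges V E \<subseteq> V \<times> V"
    by (auto simp: oriented_edges_def)
  show "finite (V \<times> V)"
    using assms by (simp add: simple_graph_def)
qed

lemma card_oriented_edges_from:
  "card {g \<in> oriented_edges V E. fst g = v} = degree V E v" if "v \<in> V"
proof -
  have "{g \<in> oriented_edges V E. fst g = v} = Pair v ` {u \<in> V. E v u}"
    using that by (auto simp: oriented_edges_def)
  then show ?thesis
    by (simp add: degree_def card_image inj_on_def)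
qed

lemma nb_matrix_rev_edge: "nb_matrix (rev_edge e) (rev_edge f) = nb_matrix f e"
  by (auto simp: nb_matrix_def rev_edge_def)

lemma nb_rowsum_eq_degree:
  assumes G: "simple_graph V E" and e: "e \<in> oriented_edges V E"
  shows "nb_rowsum V E e = of_nat (degree V E (snd e)) - 1"
proof -
  let ?O = "oriented_edges V E"
  let ?A = "{g \<in> ?O. fst g = snd e}"
  have fin: "finite ?A"
    using finite_oriented_edges[OF G] by simp
  have rev_in: "rev_edge e \<in> ?A"
    using rev_edge_in_oriented_edges[OF G e] by (simp add: rev_edge_def)
  have "nb_rowsum V E e = (\<Sum>g\<in>?O. if g \<in> ?A - {rev_edge e} then 1 else 0)"
    unfolding nb_rowsum_def nb_matrix_def by (rule sum.cong) auto
  also have "\<dots> = of_nat (card (?A - {rev_edge e}))"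
    using finite_oriented_edges[OF G]
    by (simp add: sum.If_cases) (auto intro!: arg_cong[where f = card])
  also have "\<dots> = of_nat (card ?A) - 1"
  proof -
    have "card ?A \<ge> 1"
      using fin rev_in by (metis One_nat_def Suc_leI card_gt_0_iff empty_iff)
    then show ?thesis
      using fin rev_in by (simp add: of_nat_diff)
  qed
  also have "card ?A = degree V E (snd e)"
    using e by (intro card_oriented_edges_from) (auto simp: oriented_edges_def)
  finally show ?thesis .
qed

lemma T_matrix_rev_edge:
  assumes G: "simple_graph V E"
    and e: "e \<in> oriented_edges V E" and f: "f \<in> oriented_edges V E"
  shows "T_matrix V E (rev_edge e) (rev_edge f) = T_matrix V E f e"
proof (cases "snd f = fst e")
  case True
  have "nb_rowsum V E (rev_edge e) = nb_rowsum V E f"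
    using True nb_rowsum_eq_degree[OF G f] nb_rowsum_eq_degree[OF G rev_edge_in_oriented_edges[OF G e]]
    by (simp add: rev_edge_def)
  then show ?thesis
    by (simp add: T_matrix_def nb_matrix_rev_edge)
next
  case False
  then show ?thesis
    by (simp add: T_matrix_def nb_matrix_def rev_edge_def)
qed

lemma adj_mat_vec_cnj_reindex:
  assumes \<sigma>: "bij_betw \<sigma> I I"
    and M: "\<And>e f. e \<in> I \<Longrightarrow> f \<in> I \<Longrightarrow> M (\<sigma> e) (\<sigma> f) = M f e"
    and e: "e \<in> I"
  shows "adj_mat_vec I M (\<lambda>f. cnj (x (\<sigma> f))) e = cnj (mat_vec I M x (\<sigma> e))"
proof -
  have "adj_mat_vec I M (\<lambda>f. cnj (x (\<sigma> f))) e = cnj (\<Sum>f\<in>I. M (\<sigma> e) (\<sigma> f) * x (\<sigma> f))"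
    unfolding adj_mat_vec_def cnj_sum by (rule sum.cong) (simp_all add: M e)
  also have "\<dots> = cnj (\<Sum>g\<in>I. M (\<sigma> e) g * x g)"
    using sum.reindex_bij_betw[OF \<sigma>, of "\<lambda>g. M (\<sigma> e) g * x g"] by simp
  finally show ?thesis
    by (simp add: mat_vec_def)
qed

text \<open>Only the first hypothesis is used: the degree bound merely makes D_row invertible, but
  T(f,e) and T(e\<inverse>,f\<inverse>) share their denominator anyway, and x / 0 = 0 keeps T total.\<close>

theorem mainTheorem3:
  fixes V :: "'a set" and E :: "'a \<Rightarrow> 'a \<Rightarrow> bool"
    and lam :: complex and z :: "'a \<times> 'a \<Rightarrow> complex"
  assumes "simple_graph V E"
    and "\<forall>v\<in>V. degree V E v \<ge> 2"
    and "lam \<notin> \<real>"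
    and "\<exists>e\<in>oriented_edges V E. z e \<noteq> 0"
    and "\<forall>e\<in>oriented_edges V E.
           mat_vec (oriented_edges V E) (T_matrix V E) z e = lam * z e"
  shows "\<forall>e\<in>oriented_edges V E.
           adj_mat_vec (oriented_edges V E) (T_matrix V E) (\<lambda>f. cnj (breve z f)) e
             = cnj lam * cnj (breve z e)"
proof
  fix e assume e: "e \<in> oriented_edges V E"
  note G = assms(1)
  have "adj_mat_vec (oriented_edges V E) (T_matrix V E) (\<lambda>f. cnj (breve z f)) e
      = cnj (mat_vec (oriented_edges V E) (T_matrix V E) z (rev_edge e))"
    unfolding breve_def
    using bij_betw_rev_edge_oriented_edges[OF G] T_matrix_rev_edge[OF G] e
    by (rule adj_mat_vec_cnj_reindex)
  also have "\<dots> = cnj lam * cnj (breve z e)"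
    using assms(5) rev_edge_in_oriented_edges[OF G e] by (simp add: breve_def)
  finally show "adj_mat_vec (oriented_edges V E) (T_matrix V E) (\<lambda>f. cnj (breve z f)) e
      = cnj lam * cnj (breve z e)" .
qed

end
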